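(* Let $p\ge 3$ and let $\upsilon$ be a cyclic unimodal permutation of $\{0,1,\dots,p-1\}$ with folding point $m$, and write $x_i=\upsilon^i(m)$ for $i\ge 0$. Let $\hat\upsilon$ be the piecewise-linear extension of $\upsilon$ to $[0,p-1]$. Suppose there is an integer $e\in\{0,\dots,p-2\}$ such that $m$ lies strictly between $\upsilon(e)$ and $\upsilon(e+1)$ (there is at most one such $e$). For $1\le i\le p-1$ let $\rho_i=\#\{l: 1\le l\le i-1,\ x_l>m\}$ (so $\rho_1=0$). Suppose $j\in\{1,\dots,p-1\}$ satisfies either ($x_j=e$ and $\rho_j$ is odd) or ($x_j=e+1$ and $\rho_j$ is even). Fix $0<\varepsilon<1/4$ and for $\sigma\in\{-,+\}$ consider the set of $p+j+1$ real numbers consisting of $0,1,\dots,p-1$, the point $r_\sigma$ where $r_-=m-\varepsilon$, $r_+=m+\varepsilon$, and the points $r_1,\dots,r_j$ where $r_i=x_i-\varepsilon$ if $\rho_i$ is even and $r_i=x_i+\varepsilon$ if $\rho_i$ is odd. Define a bijection $g_\sigma$ of this set by $x_k\mapsto x_{k+1}$ for $0\le k\le p-2$, $x_{p-1}\mapsto r_\sigma$, $r_\sigma\mapsto r_1$, $r_i\mapsto r_{i+1}$ for $1\le i\le j-1$, and $r_j\mapsto m$. Let $\upsilon_\sigma$ be the permutation of $\{0,1,\dots,p+j\}$ obtained by transporting $g_\sigma$ through the order-preserving bijection of this set onto $\{0,\dots,p+j\}$, and let $\beta_\sigma\in B_{p+j+1}$ be the positive permutation braid inducing $\upsilon_\sigma$.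 Then: (1) if $e<m$ (the non-dynamical preimage of $m$ lies to the left of $m$), then $\beta_+$ and $\beta_-$ are conjugate in $B_{p+j+1}$; (2) if $e\ge m$ (the non-dynamical preimage lies to the right of $m$), then $\beta_+$ and $\beta_-$ are reverse-conjugate, i.e. $\beta_-\cdot\gamma=\gamma^{-1}\cdot\beta_+$ for some $\gamma\in B_{p+j+1}$.
   Context: A permutation $\upsilon$ of $\{0,\dots,p-1\}$ is unimodal with folding point $m\in\{1,\dots,p-2\}$ if $\upsilon$ is order-preserving on $\{0,\dots,m\}$ and order-reversing on $\{m,\dots,p-1\}$; it is cyclic if it is a single $p$-cycle. The integer $e$ describes the "interval containing the non-dynamical preimage" $[e,e+1]$ of $m$ (the dynamical preimage being $\upsilon^{-1}(m)=x_{p-1}$), and $\rho_i$ counts how many of $x_1,\dots,x_{i-1}$ lie to the right of $m$. The relative order of the $p+j+1$ points above does not depend on $\varepsilon\in(0,1/4)$. Braids on $n$ strands are drawn with $n$ initial endpoints at the top and $n$ terminal endpoints at the bottom, each labelled $0,\dots,n-1$ from left to right; a braid induces the permutation sending $i$ to the label of the terminal endpoint of the strand starting at initial endpoint $i$. The positive permutation braid inducing a permutation $\pi$ is the unique braid inducing $\pi$ in which every pair of strands crosses at most once and, at each crossing, the strand whose initial endpoint is further to the left passes over the other. For braids $\alpha,\beta$, $\alpha\cdot\beta$ denotes the braid obtained by placing $\beta$ on top of $\alpha$. *)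

theory Defs
  imports Complex_Main
begin

definition cyclic_perm :: "nat \<Rightarrow> (nat \<Rightarrow> nat) \<Rightarrow> bool" where
  "cyclic_perm p v \<longleftrightarrow> bij_betw v {..<p} {..<p} \<and>
     (\<forall>a<p. \<forall>b<p. \<exists>k. (v ^^ k) a = b)"

definition unimodal :: "nat \<Rightarrow> (nat \<Rightarrow> nat) \<Rightarrow> nat \<Rightarrow> bool" where
  "unimodal p v m \<longleftrightarrow> 1 \<le> m \<and> m + 2 \<le> p \<and>
     (\<forall>a b. a < b \<and> b \<le> m \<longrightarrow> v a < v b) \<and>
     (\<forall>a b. m \<le> a \<and> a < b \<and> b \<le> p - 1 \<longrightarrow> v b < v a)"

definition orb :: "(nat \<Rightarrow> nat) \<Rightarrow> nat \<Rightarrow> nat \<Rightarrow> nat" where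
  "orb v m i = (v ^^ i) m"

definition rho :: "(nat \<Rightarrow> nat) \<Rightarrow> nat \<Rightarrow> nat \<Rightarrow> nat" where
  "rho v m i = card {l \<in> {1..<i}. orb v m l > m}"

definition rpt :: "(nat \<Rightarrow> nat) \<Rightarrow> nat \<Rightarrow> real \<Rightarrow> nat \<Rightarrow> real" where
  "rpt v m eps i = real (orb v m i) + (if even (rho v m i) then - eps else eps)"

text \<open>r_sigma; the boolean s encodes sigma: True = +, False = -\<close>
definition rsig :: "nat \<Rightarrow> real \<Rightarrow> bool \<Rightarrow> real" where
  "rsig m eps s = real m + (if s then eps else - eps)"

definition Sset :: "nat \<Rightarrow> (nat \<Rightarrow> nat) \<Rightarrow> nat \<Rightarrow> nat \<Rightarrow> real \<Rightarrow> bool \<Rightarrow> real set" where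
  "Sset p v m j eps s = real ` {..<p} \<union> {rsig m eps s} \<union> rpt v m eps ` {1..j}"

definition gmap :: "nat \<Rightarrow> (nat \<Rightarrow> nat) \<Rightarrow> nat \<Rightarrow> nat \<Rightarrow> real \<Rightarrow> bool \<Rightarrow> real \<Rightarrow> real" where
  "gmap p v m j eps s y =
    (if y = rsig m eps s then rpt v m eps 1
     else if y = rpt v m eps j then real m
     else if (\<exists>i. 1 \<le> i \<and> i < j \<and> y = rpt v m eps i)
       then rpt v m eps (Suc (THE i. 1 \<le> i \<and> i < j \<and> y = rpt v m eps i))
     else if y = real (orb v m (p - 1)) then rsig m eps s
     else real (v (nat \<lfloor>y\<rfloor>)))"

text \<open>upsilon_sigma: g_sigma transported by the order-preserving bijection Sset -> {0..p+j}\<close>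
definition upsig :: "nat \<Rightarrow> (nat \<Rightarrow> nat) \<Rightarrow> nat \<Rightarrow> nat \<Rightarrow> real \<Rightarrow> bool \<Rightarrow> nat \<Rightarrow> nat" where
  "upsig p v m j eps s k =
     (let S = Sset p v m j eps s
      in card {z \<in> S. z < gmap p v m j eps s (sorted_list_of_set S ! k)})"

text \<open>A letter (i, True) is sigma_i, (i, False) is sigma_i^{-1}; sigma_i is the crossing of the
 strands in positions i and i+1 (0-based) in which the strand at position i passes over.
 A word [a1,...,ak] denotes the product a1 . a2 . ... . ak, where alpha . beta places beta on top
 of alpha; so ak is the topmost crossing.\<close>

type_synonym bword = "(nat \<times> bool) list"

definition valid_word :: "nat \<Rightarrow> bword \<Rightarrow> bool" where
  "valid_word n w \<longleftrightarrow> (\<forall>(i, b) \<in> set w. Suc i < n)"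

inductive beq :: "nat \<Rightarrow> bword \<Rightarrow> bword \<Rightarrow> bool" for n where
  beq_refl: "beq n w w"
| beq_sym: "beq n u v \<Longrightarrow> beq n v u"
| beq_trans: "beq n u v \<Longrightarrow> beq n v w \<Longrightarrow> beq n u w"
| beq_ctx: "beq n u v \<Longrightarrow> beq n (a @ u @ b) (a @ v @ b)"
| beq_cancel: "Suc i < n \<Longrightarrow> beq n [(i, b), (i, \<not> b)] []"
| beq_comm: "Suc i < n \<Longrightarrow> Suc k < n \<Longrightarrow> i + 2 \<le> k \<Longrightarrow>
     beq n [(i, True), (k, True)] [(k, True), (i, True)]"
| beq_braid: "i + 2 < n \<Longrightarrow>
     beq n [(i, True), (Suc i, True), (i, True)] [(Suc i, True), (i, True), (Suc i, True)]"

definition binv :: "bword \<Rightarrow> bword" where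
  "binv w = rev (map (\<lambda>(i, b). (i, \<not> b)) w)"

definition pos_word :: "nat list \<Rightarrow> bword" where
  "pos_word w = map (\<lambda>i. (i, True)) w"

definition braid_conj :: "nat \<Rightarrow> bword \<Rightarrow> bword \<Rightarrow> bool" where
  "braid_conj n b1 b2 \<longleftrightarrow> (\<exists>g. valid_word n g \<and> beq n b2 (binv g @ b1 @ g))"

definition braid_revconj :: "nat \<Rightarrow> bword \<Rightarrow> bword \<Rightarrow> bool" where
  "braid_revconj n bplus bminus \<longleftrightarrow>
     (\<exists>g. valid_word n g \<and> beq n (bminus @ g) (binv g @ bplus))"

text \<open>arr : position -> initial label of the strand currently at that position.\<close>
definition swp :: "nat \<Rightarrow> (nat \<Rightarrow> nat) \<Rightarrow> nat \<Rightarrow> nat" where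
  "swp j arr = (\<lambda>k. if k = j then arr (Suc j) else if k = Suc j then arr j else arr k)"

text \<open>Processing crossings top to bottom; each crossing recorded as (over strand, under strand)
 by initial labels.\<close>
fun crossings :: "(nat \<Rightarrow> nat) \<Rightarrow> nat list \<Rightarrow> (nat \<times> nat) list" where
  "crossings arr [] = []"
| "crossings arr (j # js) = (arr j, arr (Suc j)) # crossings (swp j arr) js"

fun final_arr :: "(nat \<Rightarrow> nat) \<Rightarrow> nat list \<Rightarrow> nat \<Rightarrow> nat" where
  "final_arr arr [] = arr"
| "final_arr arr (j # js) = final_arr (swp j arr) js"

text \<open>w (a list of generator indices, product order) is a positive word on n strands realizing
 the positive permutation braid inducing perm: it induces perm (strand from initial endpoint i ends
 at terminal endpoint perm i), every pair of strands crosses at most once, and at each crossing the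
 strand with the smaller initial endpoint passes over.\<close>
definition ppb_word :: "nat \<Rightarrow> (nat \<Rightarrow> nat) \<Rightarrow> nat list \<Rightarrow> bool" where
  "ppb_word n perm w \<longleftrightarrow>
     (\<forall>j \<in> set w. Suc j < n) \<and>
     (\<forall>i<n. final_arr id (rev w) (perm i) = i) \<and>
     (\<forall>(a, b) \<in> set (crossings id (rev w)). a < b) \<and>
     (\<forall>a b. length (filter (\<lambda>c. c = (a, b) \<or> c = (b, a)) (crossings id (rev w))) \<le> 1)"

end

theory Submission
  imports Defs "HOL-Combinatorics.Permutations"
begin

text \<open>
  In both point sets \<open>r\<^sub>\<sigma>\<close> and \<open>m\<close> are neighbours, occupying the positions \<open>a, a + 1\<close>
  (in this order for \<open>\<sigma> = -\<close>, in the opposite order for \<open>\<sigma> = +\<close>). Hence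
  \<open>\<upsilon>\<^sub>+ = \<tau> \<upsilon>\<^sub>- \<tau>\<close> for the transposition \<open>\<tau> = (a a+1)\<close>. By Matsumoto's theorem
  (ascending, i.e. reduced, words with the same end result are equal in the braid group), a
  positive permutation braid is determined by its permutation. The strands of \<open>\<beta>\<^sub>-\<close>
  starting at \<open>a, a + 1\<close> do not cross, since \<open>r\<^sub>1 < x\<^sub>1\<close>. If the strands ending at
  \<open>a, a + 1\<close>, which start at \<open>x\<^sub>p\<^sub>-\<^sub>1\<close> and \<open>r\<^sub>j\<close>, cross, then \<open>\<beta>\<^sub>- = \<sigma>\<^sub>a \<gamma>\<close> and
  \<open>\<beta>\<^sub>+ = \<gamma> \<sigma>\<^sub>a\<close> are conjugate; otherwise \<open>\<beta>\<^sub>+ = \<sigma>\<^sub>a \<beta>\<^sub>- \<sigma>\<^sub>a\<close>, which is reverse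
  conjugacy. Since \<open>r\<^sub>j\<close> lies in \<open>(e, e + 1)\<close>, they cross iff \<open>x\<^sub>p\<^sub>-\<^sub>1 > e\<close>, and by
  unimodality this happens iff \<open>e < m\<close>.
\<close>

section \<open>Ranks in a finite linear order\<close>

abbreviation rank :: "'a::linorder set \<Rightarrow> 'a \<Rightarrow> nat" where
  "rank S y \<equiv> card {z \<in> S. z < y}"

lemma rank_strict_mono:
  fixes S :: "'a::linorder set"
  assumes "finite S" "y \<in> S" "y' \<in> S" "y < y'"
  shows "rank S y < rank S y'"
  using assms by (intro psubset_card_mono) auto

lemma rank_inj:
  fixes S :: "'a::linorder set"
  assumes "finite S" "y \<in> S" "y' \<in> S" "rank S y = rank S y'"
  shows "y = y'"
  using rank_strict_mono[OF assms(1,2,3)] rank_strict_mono[OF assms(1,3,2)] assms(4)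
  by (metis less_irrefl linorder_neq_iff)

lemma rank_less_card:
  fixes S :: "'a::linorder set"
  shows "finite S \<Longrightarrow> y \<in> S \<Longrightarrow> rank S y < card S"
  by (intro psubset_card_mono) auto

lemma rank_sorted_nth:
  fixes S :: "'a::linorder set"
  assumes "finite S" "k < card S"
  shows "rank S (sorted_list_of_set S ! k) = k"
proof -
  let ?xs = "sorted_list_of_set S"
  have sorted: "sorted_wrt (<) ?xs" and len: "length ?xs = card S" and set: "set ?xs = S"
    using assms(1) by (simp_all add: strict_sorted_list_of_set)
  have "{z \<in> S. z < ?xs ! k} = set (take k ?xs)"
  proof (rule set_eqI, rule iffI)
    fix z assume "z \<in> {z \<in> S. z < ?xs ! k}"
    then obtain i where i: "i < length ?xs" "?xs ! i = z" "z < ?xs ! k"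
      using set by (metis (mono_tags, lifting) in_set_conv_nth mem_Collect_eq)
    have "i < k"
    proof (rule ccontr)
      assume "\<not> i < k"
      then have "?xs ! k \<le> ?xs ! i"
        using sorted i(1) by (metis le_less not_less sorted_wrt_nth_less)
      then show False using i by simp
    qed
    then show "z \<in> set (take k ?xs)"
      using i by (metis in_set_conv_nth length_take min_less_iff_conj nth_take)
  next
    fix z assume "z \<in> set (take k ?xs)"
    then obtain i where "i < k" "?xs ! i = z"
      using assms len by (auto simp: in_set_conv_nth)
    then show "z \<in> {z \<in> S. z < ?xs ! k}"
      using sorted assms len set
      by (metis (mono_tags, lifting) mem_Collect_eq nth_mem order.strict_trans sorted_wrt_nth_less)
  qed
  then show ?thesis
    using assms len by (simp add: distinct_card)
qed

lemma sorted_nth_rank: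
  fixes S :: "'a::linorder set"
  assumes "finite S" "y \<in> S"
  shows "sorted_list_of_set S ! rank S y = y"
proof -
  have "sorted_list_of_set S ! rank S y \<in> S"
    using assms rank_less_card[OF assms] by (metis nth_mem length_sorted_list_of_set set_sorted_list_of_set)
  then show ?thesis
    using rank_inj[OF assms(1) _ assms(2)] rank_sorted_nth[OF assms(1) rank_less_card[OF assms]] by blast
qed

section \<open>Arrangements of strands and their inversions\<close>

abbreviation adj_transpose :: "nat \<Rightarrow> nat \<Rightarrow> nat" where
  "adj_transpose a \<equiv> Transposition.transpose a (Suc a)"

abbreviation word_on :: "nat \<Rightarrow> nat list \<Rightarrow> bool" where
  "word_on n js \<equiv> \<forall>j \<in> set js. Suc j < n"

lemma swp_eq_comp: "swp j arr = arr \<circ> adj_transpose j"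
  by (auto simp: swp_def transpose_def)

lemma swp_swp [simp]: "swp a (swp a arr) = arr"
  by (rule ext) (simp add: swp_def)

lemma permutes_swp: "arr permutes {..<n} \<Longrightarrow> Suc j < n \<Longrightarrow> swp j arr permutes {..<n}"
  by (simp add: swp_eq_comp permutes_compose permutes_swap_id)

lemma permutes_final_arr:
  "arr permutes {..<n} \<Longrightarrow> word_on n js \<Longrightarrow> final_arr arr js permutes {..<n}"
  by (induction js arbitrary: arr) (auto simp: permutes_swp)

lemma final_arr_append: "final_arr arr (xs @ ys) = final_arr (final_arr arr xs) ys"
  by (induction xs arbitrary: arr) auto

lemma final_arr_comp: "final_arr (f \<circ> arr) js = f \<circ> final_arr arr js"
  by (induction js arbitrary: arr) (auto simp: swp_eq_comp comp_assoc)

fun ascending :: "(nat \<Rightarrow> nat) \<Rightarrow> nat list \<Rightarrow> bool" where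
  "ascending arr [] = True"
| "ascending arr (j # js) \<longleftrightarrow> arr j < arr (Suc j) \<and> ascending (swp j arr) js"

lemma ascending_append:
  "ascending arr (xs @ ys) \<longleftrightarrow> ascending arr xs \<and> ascending (final_arr arr xs) ys"
  by (induction xs arbitrary: arr) auto

lemma ascending_if_crossings: "\<forall>(a, b) \<in> set (crossings arr js). a < b \<Longrightarrow> ascending arr js"
  by (induction js arbitrary: arr) auto

definition inversions :: "(nat \<Rightarrow> nat) \<Rightarrow> (nat \<times> nat) set" where
  "inversions arr = {(c, d). \<exists>x y. x < y \<and> arr x = d \<and> arr y = c \<and> c < d}"

lemma inversionsI: "x < y \<Longrightarrow> arr y < arr x \<Longrightarrow> (arr y, arr x) \<in> inversions arr"
  unfolding inversions_def by (simp, intro exI conjI) (auto)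

lemma inversions_id: "inversions id = {}"
  by (auto simp: inversions_def)

lemma inversions_iff:
  assumes "bij F"
  shows "(a, b) \<in> inversions F \<longleftrightarrow> a < b \<and> inv F b < inv F a"
proof
  assume "(a, b) \<in> inversions F"
  then obtain x y where "x < y" "F x = b" "F y = a" "a < b"
    by (auto simp: inversions_def)
  then show "a < b \<and> inv F b < inv F a"
    using assms by (metis bij_inv_eq_iff)
next
  assume "a < b \<and> inv F b < inv F a"
  moreover have "F (inv F b) = b" "F (inv F a) = a"
    using assms by (simp_all add: bij_is_surj surj_f_inv_f)
  ultimately show "(a, b) \<in> inversions F"
    unfolding inversions_def by blast
qed

lemma inversions_trans:
  "bij F \<Longrightarrow> (a, b) \<in> inversions F \<Longrightarrow> (b, c) \<in> inversions F \<Longrightarrow> (a, c) \<in> inversions F"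
  by (auto simp: inversions_iff)

lemma inversions_subset:
  assumes F: "F permutes {..<n}"
  shows "inversions F \<subseteq> {..<n} \<times> {..<n}"
proof
  fix q assume "q \<in> inversions F"
  then obtain x y where q: "q = (F y, F x)" "x < y" "F y < F x"
    by (auto simp: inversions_def)
  have "y < n"
  proof (rule ccontr)
    assume "\<not> y < n"
    then have "F y = y"
      using permutes_not_in[OF F] by simp
    then have "\<not> x < n"
      using permutes_in_image[OF F, of x] q \<open>\<not> y < n\<close> by auto
    then show False
      using permutes_not_in[OF F, of x] q \<open>F y = y\<close> by simp
  qed
  then show "q \<in> {..<n} \<times> {..<n}"
    using permutes_in_image[OF F] q by auto
qed

lemma finite_inversions: "F permutes {..<n} \<Longrightarrow> finite (inversions F)"
  using inversions_subset by (meson finite_SigmaI finite_lessThan finite_subset)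

lemma adjacent_notin_inversions:
  assumes "inj arr"
  shows "(arr j, arr (Suc j)) \<notin> inversions arr"
proof
  assume "(arr j, arr (Suc j)) \<in> inversions arr"
  then obtain x y where "x < y" "arr x = arr (Suc j)" "arr y = arr j"
    by (auto simp: inversions_def)
  then show False
    using assms by (metis Suc_lessD inj_eq not_less_eq)
qed

lemma inversions_swp:
  assumes "arr j < arr (Suc j)"
  shows "inversions (swp j arr) = insert (arr j, arr (Suc j)) (inversions arr)"
proof
  have order: "adj_transpose j x < adj_transpose j y" if "x < y" "\<not> (x = j \<and> y = Suc j)" for x y
    using that by (auto simp: transpose_def)
  show "inversions (swp j arr) \<subseteq> insert (arr j, arr (Suc j)) (inversions arr)"
  proof
    fix q assume "q \<in> inversions (swp j arr)"
    then obtain x y where q: "q = (arr (adj_transpose j y), arr (adj_transpose j x))" "x < y"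
        "arr (adj_transpose j y) < arr (adj_transpose j x)"
      by (auto simp: inversions_def swp_eq_comp)
    then show "q \<in> insert (arr j, arr (Suc j)) (inversions arr)"
      using order[of x y] inversionsI[of "adj_transpose j x" "adj_transpose j y" arr]
      by (cases "x = j \<and> y = Suc j") auto
  qed
  show "insert (arr j, arr (Suc j)) (inversions arr) \<subseteq> inversions (swp j arr)"
  proof (intro insert_subsetI subsetI)
    show "(arr j, arr (Suc j)) \<in> inversions (swp j arr)"
      using inversionsI[of j "Suc j" "swp j arr"] assms by (simp add: swp_def)
  next
    fix q assume "q \<in> inversions arr"
    then obtain x y where q: "q = (arr y, arr x)" "x < y" "arr y < arr x"
      by (auto simp: inversions_def)
    then have "adj_transpose j x < adj_transpose j y"
      using order assms by fastforce
    then show "q \<in> inversions (swp j arr)"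
      using inversionsI[of "adj_transpose j x" "adj_transpose j y" "swp j arr"] q
      by (simp add: swp_eq_comp)
  qed
qed

lemma inversions_mono_ascending:
  "ascending arr js \<Longrightarrow> inversions arr \<subseteq> inversions (final_arr arr js)"
proof (induction js arbitrary: arr)
  case (Cons j js)
  then show ?case
    using inversions_swp[of arr j] by auto
qed simp

lemma first_crossing_in_inversions:
  assumes "ascending A (i # r)"
  shows "(A i, A (Suc i)) \<in> inversions (final_arr A (i # r))"
  using assms inversions_swp inversions_mono_ascending[of "swp i A" r] by auto

lemma card_inversions_ascending:
  "arr permutes {..<n} \<Longrightarrow> word_on n js \<Longrightarrow> ascending arr js \<Longrightarrow>
    card (inversions (final_arr arr js)) = card (inversions arr) + length js"
proof (induction js arbitrary: arr)
  case (Cons j js)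
  have "card (inversions (swp j arr)) = Suc (card (inversions arr))"
    using inversions_swp adjacent_notin_inversions[OF permutes_inj] Cons.prems
      finite_inversions by auto
  then show ?case
    using Cons.IH[OF permutes_swp] Cons.prems by simp
qed simp

lemma inversion_between:
  assumes A: "bij A" and F: "bij F" and sub: "inversions A \<subseteq> inversions F"
    and xzy: "x < z" "z < y" and asc: "A x < A y" "(A x, A y) \<in> inversions F"
  shows "A x < A z \<and> (A x, A z) \<in> inversions F \<or> A z < A y \<and> (A z, A y) \<in> inversions F"
proof -
  let ?pos = "\<lambda>u. inv F (A u)"
  have "inj A"
    using A by (rule bij_is_inj)
  then have ne: "A z \<noteq> A x" "A z \<noteq> A y"
    using xzy by (simp_all add: inj_eq)
  moreover have "inj (inv F)"
    using F by (simp add: bij_imp_bij_inv bij_is_inj)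
  ultimately have pos_ne: "?pos z \<noteq> ?pos x"
    by (simp add: inj_eq)
  have inv_A: "?pos u < ?pos w" if "u < w" "A w < A u" for u w
  proof -
    have "(A w, A u) \<in> inversions F"
      using inversionsI[OF that] sub by blast
    then show ?thesis
      by (simp add: inversions_iff[OF F])
  qed
  have F_xy: "?pos y < ?pos x"
    using asc(2) by (simp add: inversions_iff[OF F])
  show ?thesis
  proof (cases "?pos x < ?pos z")
    case True
    then have "A z < A y"
      using ne(2) inv_A[OF xzy(2)] F_xy by (cases "A z < A y") auto
    moreover have "?pos y < ?pos z"
      using True F_xy by simp
    ultimately show ?thesis
      by (simp add: inversions_iff[OF F])
  next
    case False
    then have "?pos z < ?pos x"
      using pos_ne by simp
    moreover have "A x < A z"
      using ne(1) inv_A[OF xzy(1)] False by (cases "A x < A z") auto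
    ultimately show ?thesis
      by (simp add: inversions_iff[OF F])
  qed
qed

lemma adjacent_ascent_between:
  assumes bij: "bij A" "bij F" and sub: "inversions A \<subseteq> inversions F"
    and "x < y" "A x < A y" "(A x, A y) \<in> inversions F"
  shows "\<exists>k. A k < A (Suc k) \<and> (A k, A (Suc k)) \<in> inversions F"
  using assms(4-)
proof (induction "y - x" arbitrary: x y rule: less_induct)
  case less
  show ?case
  proof (cases "y = Suc x")
    case False
    then have xzy: "x < Suc x" "Suc x < y"
      using less.prems by auto
    from inversion_between[OF bij sub xzy less.prems(2,3)] show ?thesis
    proof
      assume "A (Suc x) < A y \<and> (A (Suc x), A y) \<in> inversions F"
      moreover have "y - Suc x < y - x"
        using xzy by simp
      ultimately show ?thesis
        using less.hyps xzy(2) by blast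
    qed blast
  qed (use less.prems in blast)
qed

lemma adjacent_ascent_in_inversions:
  assumes A: "A permutes {..<n}" and F: "F permutes {..<n}"
    and sub: "inversions A \<subset> inversions F"
  shows "\<exists>k. Suc k < n \<and> A k < A (Suc k) \<and> (A k, A (Suc k)) \<in> inversions F"
proof -
  obtain c d where cd: "(c, d) \<in> inversions F" "(c, d) \<notin> inversions A"
    using sub by auto
  obtain x y where xy: "A x = c" "A y = d"
    using permutes_bij[OF A] by (metis bij_pointE)
  have "c < d"
    using cd by (auto simp: inversions_def)
  have "x < y"
  proof (rule ccontr)
    assume "\<not> x < y"
    moreover have "x \<noteq> y"
      using xy \<open>c < d\<close> by auto
    ultimately have "(c, d) \<in> inversions A"
      using inversionsI[of y x A] xy \<open>c < d\<close> by simp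
    then show False
      using cd by simp
  qed
  then obtain k where k: "A k < A (Suc k)" "(A k, A (Suc k)) \<in> inversions F"
    using adjacent_ascent_between[OF permutes_bij[OF A] permutes_bij[OF F]] sub cd xy \<open>c < d\<close>
    by blast
  then have "A (Suc k) < n"
    using inversions_subset[OF F] by auto
  then show ?thesis
    using k permutes_in_image[OF A, of "Suc k"] by auto
qed

lemma strict_mono_surj_eq:
  fixes h :: "nat \<Rightarrow> nat"
  assumes "strict_mono h" "surj h"
  shows "h n = n"
proof (induction n rule: less_induct)
  case (less n)
  obtain m where m: "n = h m"
    using assms(2) by (metis surjD)
  show ?case
  proof (cases "m < n")
    case True
    then have "h m = m"
      using less by simp
    then show ?thesis
      using m True by simp
  next
    case False
    then have "h n \<le> h m"
      using assms(1) by (simp add: strict_mono_less_eq)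
    moreover have "n \<le> h n"
      using assms(1) by (simp add: strict_mono_imp_increasing)
    ultimately show ?thesis using m by simp
  qed
qed

lemma inversions_inject:
  assumes A: "bij A" and F: "bij F" and eq: "inversions A = inversions F"
  shows "A = F"
proof -
  have "strict_mono (inv F \<circ> A)"
  proof (rule strict_monoI)
    fix x y :: nat assume "x < y"
    then have ne: "A x \<noteq> A y"
      using A by (metis bij_def inj_eq less_irrefl)
    show "(inv F \<circ> A) x < (inv F \<circ> A) y"
    proof (cases "A x < A y")
      case True
      then have "(A x, A y) \<notin> inversions A"
        using A \<open>x < y\<close> by (simp add: inversions_iff bij_is_inj)
      moreover have "inv F (A y) \<noteq> inv F (A x)"
        using ne F by (metis bij_inv_eq_iff)
      ultimately show ?thesis
        using eq True by (auto simp: inversions_iff[OF F])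
    next
      case False
      then have "(A y, A x) \<in> inversions A"
        using ne \<open>x < y\<close> unfolding inversions_def by auto
      then show ?thesis
        using eq by (simp add: inversions_iff[OF F])
    qed
  qed
  moreover have "surj (inv F \<circ> A)"
    using A F by (metis bij_comp bij_imp_bij_inv bij_is_surj)
  ultimately have "inv F (A x) = x" for x
    using strict_mono_surj_eq by (metis comp_apply)
  then show ?thesis
    using F by (metis bij_inv_eq_iff ext)
qed

lemma ascending_word_exists:
  assumes "A permutes {..<n}" "F permutes {..<n}" "inversions A \<subseteq> inversions F"
  shows "\<exists>js. word_on n js \<and> ascending A js \<and> final_arr A js = F"
  using assms
proof (induction "card (inversions F - inversions A)" arbitrary: A rule: less_induct)
  case less
  show ?case
  proof (cases "inversions A = inversions F")
    case True
    then have "A = F"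
      using inversions_inject less.prems permutes_bij by blast
    then show ?thesis
      by (intro exI[of _ "[]"]) simp
  next
    case False
    then obtain k where k: "Suc k < n" "A k < A (Suc k)" "(A k, A (Suc k)) \<in> inversions F"
      using adjacent_ascent_in_inversions less.prems by blast
    have inv_swp: "inversions (swp k A) = insert (A k, A (Suc k)) (inversions A)"
        "(A k, A (Suc k)) \<notin> inversions A"
      using inversions_swp[OF k(2)]
        adjacent_notin_inversions[OF permutes_inj[OF less.prems(1)]] by auto
    have "card (inversions F - inversions (swp k A)) < card (inversions F - inversions A)"
      using finite_inversions[OF less.prems(2)] inv_swp k by (intro psubset_card_mono) auto
    moreover have "inversions (swp k A) \<subseteq> inversions F"
      using inv_swp k(3) less.prems(3) by auto
    ultimately obtain js where "word_on n js" "ascending (swp k A) js" "final_arr (swp k A) js = F"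
      using less.hyps permutes_swp[OF less.prems(1) k(1)] less.prems(2) by blast
    then show ?thesis
      using k by (intro exI[of _ "k # js"]) simp
  qed
qed

lemma ascending_word_exchange:
  assumes A: "A permutes {..<n}" and "word_on n js" "ascending A js"
    and "Suc k < n" "A k < A (Suc k)" "(A k, A (Suc k)) \<in> inversions (final_arr A js)"
  shows "\<exists>js'. word_on n js' \<and> ascending (swp k A) js' \<and> final_arr (swp k A) js' = final_arr A js"
  using assms inversions_mono_ascending inversions_swp
  by (intro ascending_word_exists permutes_swp permutes_final_arr) auto

section \<open>Matsumoto's theorem for ascending words\<close>

declare beq_trans [trans]

lemma beq_append: "beq n u u' \<Longrightarrow> beq n v v' \<Longrightarrow> beq n (u @ v) (u' @ v')"
  using beq_ctx[of n u u' "[]" v] beq_ctx[of n v v' u' "[]"] by (auto intro: beq_trans)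

lemma pos_word_append [simp]: "pos_word (xs @ ys) = pos_word xs @ pos_word ys"
  by (simp add: pos_word_def)

lemma pos_word_simps [simp]: "pos_word [] = []" "pos_word (x # xs) = (x, True) # pos_word xs"
  by (simp_all add: pos_word_def)

lemma swp_braid_relation: "swp (Suc i) (swp i (swp (Suc i) A)) = swp i (swp (Suc i) (swp i A))"
  by (rule ext) (simp add: swp_def)

lemma swp_commute: "i + 2 \<le> k \<or> k + 2 \<le> i \<Longrightarrow> swp k (swp i A) = swp i (swp k A)"
  by (rule ext) (auto simp: swp_def)

lemma length_ascending_eq:
  assumes "A permutes {..<n}" "word_on n js1" "word_on n js2" "ascending A js1" "ascending A js2"
    "final_arr A js1 = final_arr A js2"
  shows "length js1 = length js2"
  using card_inversions_ascending[OF assms(1,2,4)] card_inversions_ascending[OF assms(1,3,5)] assms(6)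
  by simp

text \<open>A list \<open>js\<close> of crossings is read from top to bottom, so its braid word is
  \<open>pos_word (rev js)\<close>.\<close>

definition reduced_words_equiv :: "nat \<Rightarrow> nat \<Rightarrow> bool" where
  "reduced_words_equiv n L \<longleftrightarrow> (\<forall>A js1 js2. length js1 = L \<longrightarrow> A permutes {..<n} \<longrightarrow>
     word_on n js1 \<longrightarrow> word_on n js2 \<longrightarrow> ascending A js1 \<longrightarrow> ascending A js2 \<longrightarrow>
     final_arr A js1 = final_arr A js2 \<longrightarrow> beq n (pos_word (rev js1)) (pos_word (rev js2)))"

lemma reduced_words_equivD:
  assumes "reduced_words_equiv n (length js1)" "A permutes {..<n}" "word_on n js1" "word_on n js2"
    "ascending A js1" "ascending A js2" "final_arr A js1 = final_arr A js2"
  shows "beq n (pos_word (rev js1)) (pos_word (rev js2))"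
  using assms unfolding reduced_words_equiv_def by blast

lemma ascending_braid_move:
  assumes A: "A permutes {..<n}" and w1: "word_on n (i # r1)" and w2: "word_on n (Suc i # r2)"
    and asc1: "ascending A (i # r1)" and asc2: "ascending A (Suc i # r2)"
    and final: "final_arr A (i # r1) = final_arr A (Suc i # r2)"
  obtains r3 where "word_on n (i # Suc i # r3)"
    "ascending (swp i A) (Suc i # i # r3)" "final_arr (swp i A) (Suc i # i # r3) = final_arr (swp i A) r1"
    "ascending (swp (Suc i) A) (i # Suc i # r3)"
    "final_arr (swp (Suc i) A) (i # Suc i # r3) = final_arr (swp (Suc i) A) r2"
proof -
  define F where "F = final_arr A (i # r1)"
  have F_perm: "F permutes {..<n}"
    unfolding F_def using permutes_final_arr A w1 by blast
  have ab: "A i < A (Suc i)" and bc: "A (Suc i) < A (Suc (Suc i))"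
    using asc1 asc2 by auto
  have inv_ab: "(A i, A (Suc i)) \<in> inversions F"
    unfolding F_def by (rule first_crossing_in_inversions[OF asc1])
  have inv_bc: "(A (Suc i), A (Suc (Suc i))) \<in> inversions F"
    unfolding F_def final by (rule first_crossing_in_inversions[OF asc2])
  have inv_ac: "(A i, A (Suc (Suc i))) \<in> inversions F"
    using inversions_trans[OF permutes_bij[OF F_perm] inv_ab inv_bc] .
  have n2: "Suc (Suc i) < n"
    using w2 by simp
  define B where "B = swp i A"
  have B: "B permutes {..<n}"
    unfolding B_def using permutes_swp A n2 by simp
  have B_r1: "ascending B r1" "word_on n r1" "final_arr B r1 = F"
    using asc1 w1 unfolding B_def F_def by auto
  have "B (Suc i) < B (Suc (Suc i))" "(B (Suc i), B (Suc (Suc i))) \<in> inversions F"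
    using ab bc inv_ac unfolding B_def by (auto simp: swp_def)
  then obtain r4 where r4: "word_on n r4" "ascending (swp (Suc i) B) r4" "final_arr (swp (Suc i) B) r4 = F"
    using ascending_word_exchange[OF B B_r1(2,1) n2] B_r1(3) by metis
  define C where "C = swp (Suc i) B"
  have C: "C permutes {..<n}"
    unfolding C_def using permutes_swp B n2 by simp
  have "C i < C (Suc i)" "(C i, C (Suc i)) \<in> inversions F"
    using ab bc inv_bc unfolding C_def B_def by (auto simp: swp_def)
  then obtain r3 where r3: "word_on n r3" "ascending (swp i C) r3" "final_arr (swp i C) r3 = F"
    using ascending_word_exchange[OF C r4(1) r4(2)[folded C_def]] n2 r4(3)[folded C_def]
    by (metis Suc_lessD)
  have "swp (Suc i) (swp i (swp (Suc i) A)) = swp i C"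
    unfolding C_def B_def by (rule swp_braid_relation)
  then show ?thesis
    using that[of r3] ab bc r3 n2 B_r1 final unfolding B_def C_def F_def by (simp add: swp_def)
qed

lemma reduced_words_equiv_adjacent:
  assumes IH: "reduced_words_equiv n (length r1)"
    and A: "A permutes {..<n}" and w1: "word_on n (i # r1)" and w2: "word_on n (Suc i # r2)"
    and asc1: "ascending A (i # r1)" and asc2: "ascending A (Suc i # r2)"
    and final: "final_arr A (i # r1) = final_arr A (Suc i # r2)"
  shows "beq n (pos_word (rev (i # r1))) (pos_word (rev (Suc i # r2)))"
proof -
  obtain r3 where r3: "word_on n (i # Suc i # r3)"
    "ascending (swp i A) (Suc i # i # r3)" "final_arr (swp i A) (Suc i # i # r3) = final_arr (swp i A) r1"
    "ascending (swp (Suc i) A) (i # Suc i # r3)"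
    "final_arr (swp (Suc i) A) (i # Suc i # r3) = final_arr (swp (Suc i) A) r2"
    using ascending_braid_move[OF A w1 w2 asc1 asc2 final] .
  have n2: "Suc (Suc i) < n"
    using w2 by simp
  have "length r2 = length r1"
    using length_ascending_eq[OF A w1 w2 asc1 asc2 final] by simp
  then have eq2: "beq n (pos_word (rev r2)) (pos_word (rev r3) @ [(Suc i, True), (i, True)])"
    using reduced_words_equivD[of n r2 "swp (Suc i) A" "i # Suc i # r3"] IH permutes_swp[OF A n2]
      w2 asc2 r3 by simp
  have eq1: "beq n (pos_word (rev r1)) (pos_word (rev r3) @ [(i, True), (Suc i, True)])"
    using reduced_words_equivD[of n r1 "swp i A" "Suc i # i # r3"] IH permutes_swp[OF A] w1 asc1 r3
    by simp
  have "beq n (pos_word (rev (i # r1))) (pos_word (rev r3) @ [(i, True), (Suc i, True), (i, True)])"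
    using beq_append[OF eq1 beq_refl[of n "[(i, True)]"]] by simp
  also have "beq n \<dots> (pos_word (rev r3) @ [(Suc i, True), (i, True), (Suc i, True)])"
    using n2 by (intro beq_append beq_refl beq_braid) simp
  also have "beq n \<dots> (pos_word (rev (Suc i # r2)))"
    using beq_sym[OF beq_append[OF eq2 beq_refl[of n "[(Suc i, True)]"]]] by simp
  finally show ?thesis .
qed

lemma ascending_commute_move:
  assumes A: "A permutes {..<n}" and w1: "word_on n (i # r1)" and w2: "word_on n (k # r2)"
    and asc1: "ascending A (i # r1)" and asc2: "ascending A (k # r2)"
    and final: "final_arr A (i # r1) = final_arr A (k # r2)"
    and far: "i + 2 \<le> k \<or> k + 2 \<le> i"
  obtains r3 where "word_on n r3"
    "ascending (swp i A) (k # r3)" "final_arr (swp i A) (k # r3) = final_arr (swp i A) r1"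
    "ascending (swp k A) (i # r3)" "final_arr (swp k A) (i # r3) = final_arr (swp k A) r2"
proof -
  define F where "F = final_arr A (i # r1)"
  define B where "B = swp i A"
  have B: "B permutes {..<n}"
    unfolding B_def using permutes_swp A w1 by simp
  have B_r1: "ascending B r1" "word_on n r1" "final_arr B r1 = F"
    using asc1 w1 unfolding B_def F_def by auto
  have inv_k: "(A k, A (Suc k)) \<in> inversions F"
    unfolding F_def final by (rule first_crossing_in_inversions[OF asc2])
  have "B k < B (Suc k)" "(B k, B (Suc k)) \<in> inversions F"
    using far inv_k asc2 unfolding B_def by (auto simp: swp_def)
  moreover have "Suc k < n"
    using w2 by simp
  moreover obtain r3 where "word_on n r3" "ascending (swp k B) r3" "final_arr (swp k B) r3 = F"
    using ascending_word_exchange[OF B B_r1(2,1) \<open>Suc k < n\<close>] B_r1(3) calculation by metis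
  moreover have "swp k B = swp i (swp k A)"
    unfolding B_def by (rule swp_commute[OF far])
  ultimately show ?thesis
    using that[of r3] far asc1 B_r1 final unfolding B_def F_def by (auto simp: swp_def)
qed

lemma reduced_words_equiv_distant:
  assumes IH: "reduced_words_equiv n (length r1)"
    and A: "A permutes {..<n}" and w1: "word_on n (i # r1)" and w2: "word_on n (k # r2)"
    and asc1: "ascending A (i # r1)" and asc2: "ascending A (k # r2)"
    and final: "final_arr A (i # r1) = final_arr A (k # r2)"
    and far: "i + 2 \<le> k \<or> k + 2 \<le> i"
  shows "beq n (pos_word (rev (i # r1))) (pos_word (rev (k # r2)))"
proof -
  obtain r3 where r3: "word_on n r3"
    "ascending (swp i A) (k # r3)" "final_arr (swp i A) (k # r3) = final_arr (swp i A) r1"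
    "ascending (swp k A) (i # r3)" "final_arr (swp k A) (i # r3) = final_arr (swp k A) r2"
    using ascending_commute_move[OF A w1 w2 asc1 asc2 final far] .
  have si: "Suc i < n" and sk: "Suc k < n"
    using w1 w2 by auto
  have "length r2 = length r1"
    using length_ascending_eq[OF A w1 w2 asc1 asc2 final] by simp
  then have eq2: "beq n (pos_word (rev r2)) (pos_word (rev r3) @ [(i, True)])"
    using reduced_words_equivD[of n r2 "swp k A" "i # r3"] IH permutes_swp[OF A sk] w2 asc2 r3 si
    by simp
  have eq1: "beq n (pos_word (rev r1)) (pos_word (rev r3) @ [(k, True)])"
    using reduced_words_equivD[of n r1 "swp i A" "k # r3"] IH permutes_swp[OF A si] w1 asc1 r3 sk
    by simp
  have "beq n (pos_word (rev (i # r1))) (pos_word (rev r3) @ [(k, True), (i, True)])"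
    using beq_append[OF eq1 beq_refl[of n "[(i, True)]"]] by simp
  also have "beq n \<dots> (pos_word (rev r3) @ [(i, True), (k, True)])"
    using far si sk by (intro beq_append beq_refl) (metis beq_comm beq_sym)
  also have "beq n \<dots> (pos_word (rev (k # r2)))"
    using beq_sym[OF beq_append[OF eq2 beq_refl[of n "[(k, True)]"]]] by simp
  finally show ?thesis .
qed

lemma reduced_words_equiv_all: "reduced_words_equiv n L"
proof (induction L rule: less_induct)
  case (less L)
  show ?case
    unfolding reduced_words_equiv_def
  proof (intro allI impI)
    fix A js1 js2
    assume L: "length js1 = L" and A: "A permutes {..<n}" and w: "word_on n js1" "word_on n js2"
      and asc: "ascending A js1" "ascending A js2" and final: "final_arr A js1 = final_arr A js2"
    have len: "length js1 = length js2"
      using length_ascending_eq[OF A w asc final] .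
    show "beq n (pos_word (rev js1)) (pos_word (rev js2))"
    proof (cases js1)
      case Nil
      then show ?thesis using len by (simp add: beq_refl)
    next
      case (Cons i r1)
      then obtain k r2 where js2: "js2 = k # r2"
        using len by (cases js2) auto
      have IH: "reduced_words_equiv n (length r1)"
        using less L Cons by simp
      consider "i = k" | "k = Suc i" | "i = Suc k" | "i + 2 \<le> k \<or> k + 2 \<le> i"
        by linarith
      then show ?thesis
      proof cases
        case 1
        then have "beq n (pos_word (rev r1)) (pos_word (rev r2))"
          using reduced_words_equivD[OF IH, of "swp k A" r2] permutes_swp[OF A] w asc final len
          unfolding Cons js2 by simp
        then show ?thesis
          unfolding Cons js2 1 by (simp add: beq_append beq_refl)
      next
        case 2
        then show ?thesis
          using reduced_words_equiv_adjacent[OF IH A] w asc final unfolding Cons js2 by simp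
      next
        case 3
        have "length r2 = length r1"
          using len Cons js2 by simp
        then have "beq n (pos_word (rev (k # r2))) (pos_word (rev (Suc k # r1)))"
          using reduced_words_equiv_adjacent[of n r2 A k r1] IH A w asc final
          unfolding Cons js2 3 by simp
        then show ?thesis
          unfolding Cons js2 3 by (rule beq_sym)
      next
        case 4
        then show ?thesis
          using reduced_words_equiv_distant[OF IH A] w asc final unfolding Cons js2 by simp
      qed
    qed
  qed
qed

theorem ascending_words_beq:
  assumes "A permutes {..<n}" "word_on n js1" "word_on n js2" "ascending A js1" "ascending A js2"
    "final_arr A js1 = final_arr A js2"
  shows "beq n (pos_word (rev js1)) (pos_word (rev js2))"
  using reduced_words_equivD[OF reduced_words_equiv_all assms] .

section \<open>Positive permutation braids of conjugate permutations\<close>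

lemma ascending_relabel:
  assumes "ascending A js" "(a, Suc a) \<notin> inversions (final_arr A js)"
  shows "ascending (adj_transpose a \<circ> A) js"
  using assms
proof (induction js arbitrary: A)
  case (Cons j js)
  have asc: "A j < A (Suc j)"
    using Cons.prems by simp
  have "(A j, A (Suc j)) \<in> inversions (final_arr A (j # js))"
    using first_crossing_in_inversions Cons.prems by blast
  then have "\<not> (A j = a \<and> A (Suc j) = Suc a)"
    using Cons.prems(2) by auto
  then have "adj_transpose a (A j) < adj_transpose a (A (Suc j))"
    using asc by (auto simp: transpose_def)
  moreover have "ascending (adj_transpose a \<circ> swp j A) js"
    using Cons.IH Cons.prems by (simp add: comp_def)
  moreover have "swp j (adj_transpose a \<circ> A) = adj_transpose a \<circ> swp j A"
    by (simp add: swp_eq_comp comp_assoc)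
  ultimately show ?case
    by (simp add: comp_def)
qed simp

lemma ppb_word_ascending:
  assumes "ppb_word N perm w"
  shows "word_on N (rev w)" "ascending id (rev w)" "final_arr id (rev w) permutes {..<N}"
    "\<And>i. i < N \<Longrightarrow> final_arr id (rev w) (perm i) = i"
  using assms permutes_final_arr[OF permutes_id] ascending_if_crossings
  unfolding ppb_word_def by auto

lemma ppb_word_final_arr_inv:
  assumes "ppb_word N perm w" "i < N"
  shows "inv (final_arr id (rev w)) i = perm i"
  using ppb_word_ascending[OF assms(1)] assms(2) by (simp add: permutes_inv_eq)

lemma ppb_word_final_arr_conj:
  assumes pp: "ppb_word N pplus wp" and pm: "ppb_word N pminus wm" and aN: "Suc a < N"
    and conj: "\<And>k. k < N \<Longrightarrow> pplus k = adj_transpose a (pminus (adj_transpose a k))"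
  shows "final_arr id (rev wp) = adj_transpose a \<circ> final_arr id (rev wm) \<circ> adj_transpose a"
proof
  fix x
  define Fm where "Fm = final_arr id (rev wm)"
  define Fp where "Fp = final_arr id (rev wp)"
  note m = ppb_word_ascending[OF pm, folded Fm_def]
  note p = ppb_word_ascending[OF pp, folded Fp_def]
  have "Fp (adj_transpose a y) = adj_transpose a (Fm y)" for y
  proof (cases "y < N")
    case True
    then have "Fm y < N"
      using permutes_in_image[OF m(3)] by simp
    then have k: "adj_transpose a (Fm y) < N"
      using aN by (auto simp: transpose_def)
    have "pminus (Fm y) = y"
      using ppb_word_final_arr_inv[OF pm \<open>Fm y < N\<close>, folded Fm_def] m(3)
      by (simp add: permutes_inverses)
    then have "pplus (adj_transpose a (Fm y)) = adj_transpose a y"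
      using conj[OF k] by simp
    then show ?thesis
      using p(4)[OF k] by simp
  next
    case False
    then show ?thesis
      using aN permutes_not_in[OF m(3)] permutes_not_in[OF p(3)] by (simp add: transpose_def)
  qed
  from this[of "adj_transpose a x"] show "Fp x = (adj_transpose a \<circ> Fm \<circ> adj_transpose a) x"
    by simp
qed

lemma ppb_word_no_inversion:
  assumes "ppb_word N perm w" "Suc a < N" "perm a < perm (Suc a)"
  shows "(a, Suc a) \<notin> inversions (final_arr id (rev w))"
  using assms ppb_word_final_arr_inv[OF assms(1)]
    inversions_iff[OF permutes_bij[OF ppb_word_ascending(3)[OF assms(1)]]] by simp

lemma braid_conj_rotate:
  assumes aN: "Suc a < N" and bm: "beq N bm ((a, True) # c)" and bp: "beq N bp (c @ [(a, True)])"
  shows "braid_conj N bp bm"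
proof -
  have "beq N bm ([(a, True)] @ c @ [])"
    using bm by simp
  also have "beq N \<dots> ([(a, True)] @ c @ [(a, True), (a, \<not> True)])"
    using aN by (intro beq_append beq_refl beq_sym[OF beq_cancel])
  also have "beq N \<dots> ([(a, True)] @ bp @ [(a, False)])"
    using beq_append[OF beq_refl[of N "[(a, True)]"] beq_append[OF beq_sym[OF bp] beq_refl]]
    by simp
  finally have "beq N bm (binv [(a, False)] @ bp @ [(a, False)])"
    by (simp add: binv_def)
  moreover have "valid_word N [(a, False)]"
    using aN by (simp add: valid_word_def)
  ultimately show ?thesis
    unfolding braid_conj_def by blast
qed

lemma braid_revconj_sandwich:
  assumes aN: "Suc a < N" and bp: "beq N bp ((a, True) # bm @ [(a, True)])"
  shows "braid_revconj N bp bm"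
proof -
  have "beq N (bm @ [(a, True)]) ([] @ bm @ [(a, True)])"
    by (simp add: beq_refl)
  also have "beq N \<dots> ([(a, False), (a, \<not> False)] @ bm @ [(a, True)])"
    using aN by (intro beq_append beq_refl beq_sym[OF beq_cancel])
  also have "beq N \<dots> ([(a, False)] @ bp)"
    using beq_append[OF beq_refl[of N "[(a, False)]"] beq_sym[OF bp]] by simp
  finally have "beq N (bm @ [(a, True)]) (binv [(a, True)] @ bp)"
    by (simp add: binv_def)
  moreover have "valid_word N [(a, True)]"
    using aN by (simp add: valid_word_def)
  ultimately show ?thesis
    unfolding braid_revconj_def by blast
qed

lemma ppb_braid_conj:
  assumes pp: "ppb_word N pplus wp" and pm: "ppb_word N pminus wm" and aN: "Suc a < N"
    and conj: "\<And>k. k < N \<Longrightarrow> pplus k = adj_transpose a (pminus (adj_transpose a k))"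
    and asc: "pminus a < pminus (Suc a)"
    and crossing: "pminus q1 = a" "pminus q2 = Suc a" "q2 < q1" "q1 < N"
  shows "braid_conj N (pos_word wp) (pos_word wm)"
proof -
  define Fm where "Fm = final_arr id (rev wm)"
  note m = ppb_word_ascending[OF pm, folded Fm_def]
  note p = ppb_word_ascending[OF pp]
  define G where "G = swp a Fm"
  have G: "G permutes {..<N}"
    unfolding G_def using permutes_swp m(3) aN by blast
  have G_asc: "G a < G (Suc a)"
    using m(4)[of q1] m(4)[of q2] crossing unfolding G_def by (simp add: swp_def)
  have Fm_G: "swp a G = Fm"
    unfolding G_def by simp
  obtain js where js: "word_on N js" "ascending id js" "final_arr id js = G"
    using ascending_word_exists[OF permutes_id G] inversions_id by auto
  have "word_on N (js @ [a])" "ascending id (js @ [a])" "final_arr id (js @ [a]) = Fm"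
    using js G_asc Fm_G aN by (simp_all add: ascending_append final_arr_append)
  then have wm_eq: "beq N (pos_word wm) ((a, True) # pos_word (rev js))"
    using ascending_words_beq[OF permutes_id m(1) _ m(2)] unfolding Fm_def by fastforce
  have "inversions G \<subseteq> inversions Fm"
    using inversions_swp[OF G_asc] Fm_G by auto
  then have "ascending (adj_transpose a \<circ> id) js"
    using ascending_relabel[of id js a] js ppb_word_no_inversion[OF pm aN asc]
    unfolding Fm_def by auto
  moreover have "final_arr (adj_transpose a \<circ> id) js = final_arr id (rev wp)"
    using final_arr_comp[of "adj_transpose a" id js] js ppb_word_final_arr_conj[OF pp pm aN conj]
    unfolding G_def Fm_def by (simp add: swp_eq_comp comp_assoc)
  moreover have "word_on N (a # js)"
    using js aN by simp
  ultimately have "beq N (pos_word wp) (pos_word (rev js) @ [(a, True)])"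
    using ascending_words_beq[OF permutes_id p(1) _ p(2)] by (fastforce simp: swp_eq_comp)
  then show ?thesis
    using braid_conj_rotate[OF aN wm_eq] by blast
qed

lemma ppb_braid_revconj:
  assumes pp: "ppb_word N pplus wp" and pm: "ppb_word N pminus wm" and aN: "Suc a < N"
    and conj: "\<And>k. k < N \<Longrightarrow> pplus k = adj_transpose a (pminus (adj_transpose a k))"
    and asc: "pminus a < pminus (Suc a)" and moved: "pminus a \<noteq> a"
    and no_crossing: "pminus q1 = a" "pminus q2 = Suc a" "q1 < q2" "q2 < N"
  shows "braid_revconj N (pos_word wp) (pos_word wm)"
proof -
  define Fm where "Fm = final_arr id (rev wm)"
  note m = ppb_word_ascending[OF pm, folded Fm_def]
  have Fm_a: "Fm a = q1" "Fm (Suc a) = q2"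
    using m(4)[of q1] m(4)[of q2] no_crossing by simp_all
  have "Fm a \<noteq> a"
    using ppb_word_final_arr_inv[OF pm, of a, folded Fm_def] aN moved m(3)
    by (metis Suc_lessD permutes_inverses(2))
  then have "adj_transpose a (Fm a) < adj_transpose a (Fm (Suc a))"
    using Fm_a no_crossing(3) by (auto simp: transpose_def)
  moreover have "ascending (adj_transpose a \<circ> id) (rev wm)"
    using ascending_relabel[of id "rev wm" a] m ppb_word_no_inversion[OF pm aN asc]
    unfolding Fm_def by auto
  moreover have "final_arr (adj_transpose a) (rev wm) = adj_transpose a \<circ> Fm"
    using final_arr_comp[of "adj_transpose a" id "rev wm"] unfolding Fm_def by simp
  ultimately have "ascending id (a # rev wm @ [a])"
      "final_arr id (a # rev wm @ [a]) = final_arr id (rev wp)"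
    using ppb_word_final_arr_conj[OF pp pm aN conj]
    by (simp_all add: ascending_append final_arr_append swp_eq_comp comp_assoc Fm_def)
  moreover have "word_on N (a # rev wm @ [a])"
    using m(1) aN by simp
  ultimately have "beq N (pos_word wp) ((a, True) # pos_word wm @ [(a, True)])"
    using ascending_words_beq[OF permutes_id ppb_word_ascending(1)[OF pp] _ ppb_word_ascending(2)[OF pp]]
    by fastforce
  then show ?thesis
    using braid_revconj_sandwich[OF aN] by blast
qed

section \<open>Orbits of cyclic unimodal permutations\<close>

lemma orb_0 [simp]: "orb v m 0 = m"
  by (simp add: orb_def)

lemma orb_Suc: "orb v m (Suc i) = v (orb v m i)"
  by (simp add: orb_def)

context
  fixes p m :: nat and v :: "nat \<Rightarrow> nat"
  assumes cyc: "cyclic_perm p v" and mp: "m < p"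
begin

lemma cyclic_perm_lt: "k < p \<Longrightarrow> v k < p"
  using cyc unfolding cyclic_perm_def bij_betw_def by auto

lemma cyclic_perm_inj_on: "inj_on v {..<p}"
  using cyc unfolding cyclic_perm_def bij_betw_def by auto

lemma orb_lt: "orb v m i < p"
  by (induction i) (auto simp: orb_Suc mp cyclic_perm_lt)

lemma orb_shift:
  assumes "orb v m i = orb v m k" "i \<le> s"
  shows "orb v m (s + (k - i)) = orb v m s"
  using assms(2)
proof (induction s rule: nat_induct_at_least)
  case base
  then show ?case
    using assms by (cases "i \<le> k") auto
next
  case (Suc s)
  then show ?case
    by (simp add: orb_Suc)
qed

lemma orb_distinct:
  assumes "i < k" "k < p"
  shows "orb v m i \<noteq> orb v m k"
proof
  assume eq: "orb v m i = orb v m k"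
  have all: "orb v m t \<in> orb v m ` {..<k}" for t
  proof (induction t rule: less_induct)
    case (less t)
    show ?case
    proof (cases "t < k")
      case False
      then have "t = (t - (k - i)) + (k - i)" "i \<le> t - (k - i)"
        using assms by auto
      then have "orb v m t = orb v m (t - (k - i))"
        using orb_shift[OF eq] by metis
      moreover have "t - (k - i) < t"
        using assms False by auto
      ultimately show ?thesis
        using less by simp
    qed simp
  qed
  have "{..<p} \<subseteq> orb v m ` {..<k}"
  proof
    fix b assume "b \<in> {..<p}"
    then obtain t where "(v ^^ t) m = b"
      using cyc mp unfolding cyclic_perm_def by auto
    then show "b \<in> orb v m ` {..<k}"
      using all[of t] by (simp add: orb_def)
  qed
  then have "card {..<p} \<le> card (orb v m ` {..<k})"
    by (intro card_mono) auto
  also have "\<dots> \<le> k"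
    using card_image_le[of "{..<k}"] by simp
  finally show False
    using assms by simp
qed

lemma orb_ne_start: "1 \<le> i \<Longrightarrow> i < p \<Longrightarrow> orb v m i \<noteq> m"
  using orb_distinct[of 0 i] by simp

lemma orb_inj: "i < p \<Longrightarrow> k < p \<Longrightarrow> orb v m i = orb v m k \<Longrightarrow> i = k"
  using orb_distinct by (metis nat_neq_iff)

lemma orb_period: "orb v m p = m"
proof -
  have "inj_on (orb v m) {..<p}"
    by (rule inj_onI) (auto intro: orb_inj)
  then have "orb v m ` {..<p} = {..<p}"
    using orb_lt by (simp add: card_image card_subset_eq image_subsetI)
  then obtain s where s: "s < p" "orb v m s = orb v m p"
    using orb_lt[of p] by (metis imageE lessThan_iff)
  show ?thesis
  proof (cases s)
    case (Suc s')
    have p1: "p = Suc (p - 1)"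
      using mp by simp
    have "v (orb v m s') = v (orb v m (p - 1))"
      using s Suc p1 by (metis orb_Suc)
    then have "orb v m s' = orb v m (p - 1)"
      using cyclic_perm_inj_on orb_lt by (meson inj_onD lessThan_iff)
    then have "s' = p - 1"
      using orb_inj orb_lt Suc s mp by simp
    then show ?thesis
      using s Suc by simp
  qed (use s in simp)
qed

lemma v_orb_last: "v (orb v m (p - 1)) = m"
  using orb_period orb_Suc mp by (metis Suc_diff_1 gr_implies_not0 not_gr0)

end

lemma unimodal_other_preimage_left:
  assumes "unimodal p v m" "e < m" "min (v e) (v (e + 1)) < m" "m < max (v e) (v (e + 1))"
    and "v q = m"
  shows "e < q"
proof (rule ccontr)
  have inc: "\<And>a b. a < b \<Longrightarrow> b \<le> m \<Longrightarrow> v a < v b"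
    using assms(1) unfolding unimodal_def by auto
  have "v e < v (e + 1)"
    using inc assms(2) by simp
  then have "v e < m"
    using assms(3) by simp
  moreover assume "\<not> e < q"
  ultimately show False
    using inc[of q e] assms(2,5) by (cases "q = e") auto
qed

lemma unimodal_other_preimage_right:
  assumes "unimodal p v m" "m \<le> e" "e + 2 \<le> p" "min (v e) (v (e + 1)) < m"
    "m < max (v e) (v (e + 1))" and "v q = m" "q < p"
  shows "q \<le> e"
proof (rule ccontr)
  have dec: "\<And>a b. m \<le> a \<Longrightarrow> a < b \<Longrightarrow> b \<le> p - 1 \<Longrightarrow> v b < v a"
    using assms(1) unfolding unimodal_def by auto
  have "v (e + 1) < v e"
    using dec assms(2,3) by simp
  then have "v (e + 1) < m"
    using assms(4) by simp
  moreover assume "\<not> q \<le> e"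
  moreover have "q \<le> p - 1"
    using assms(7) by simp
  ultimately show False
    using dec[of "e + 1" q] assms(2,6) by (cases "q = e + 1") auto
qed

section \<open>The perturbed point sets\<close>

lemma perturbed_nat_less_iff:
  fixes s t :: real
  assumes "\<bar>s\<bar> < 1/2" "\<bar>t\<bar> < 1/2"
  shows "real a + s < real b + t \<longleftrightarrow> a < b \<or> a = b \<and> s < t"
proof -
  have "real a + 1 \<le> real b" if "a < b" for a b :: nat
    using that by linarith
  then show ?thesis
    using assms by (cases a b rule: linorder_cases) force+
qed

lemma perturbed_nat_eq_iff:
  fixes s t :: real
  assumes "\<bar>s\<bar> < 1/2" "\<bar>t\<bar> < 1/2"
  shows "real a + s = real b + t \<longleftrightarrow> a = b \<and> s = t"
  using perturbed_nat_less_iff[OF assms, of a b] perturbed_nat_less_iff[OF assms(2,1), of b a]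
  by auto

locale orbit_perturbation =
  fixes p m j :: nat and v :: "nat \<Rightarrow> nat" and eps :: real
  assumes cyc: "cyclic_perm p v" and mp: "m < p" and j1: "1 \<le> j" and jp: "j < p"
    and eps0: "0 < eps" and eps1: "eps < 1/4"
begin

abbreviation "ox \<equiv> orb v m"
abbreviation "rp \<equiv> rpt v m eps"
abbreviation "rs \<equiv> rsig m eps"
abbreviation "S \<equiv> Sset p v m j eps"
abbreviation "g \<equiv> gmap p v m j eps"
abbreviation "ups \<equiv> upsig p v m j eps"

abbreviation offset :: "nat \<Rightarrow> real" where
  "offset i \<equiv> if even (rho v m i) then - eps else eps"

definition shared_points :: "real set" where
  "shared_points = real ` {..<p} \<union> rp ` {1..j}"

lemma rp_eq: "rp i = real (ox i) + offset i"
  by (simp add: rpt_def)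

lemma offset_small: "\<bar>offset i\<bar> < 1/2"
  using eps0 eps1 by simp

lemma rs_eq: "rs s = real m + (if s then eps else - eps)"
  by (simp add: rsig_def)

lemma S_eq: "S s = insert (rs s) shared_points"
  by (auto simp: Sset_def shared_points_def)

lemma finite_shared_points: "finite shared_points"
  by (simp add: shared_points_def)

lemma finite_S: "finite (S s)"
  by (simp add: S_eq finite_shared_points)

lemma real_ne_rp: "real k \<noteq> rp i"
  using perturbed_nat_eq_iff[of 0 "offset i" k "ox i"] offset_small eps0 by (auto simp: rp_eq)

lemma real_ne_rs: "real k \<noteq> rs s"
  using perturbed_nat_eq_iff[of 0 "if s then eps else - eps" k m] eps0 eps1 by (auto simp: rs_eq)

lemma rp_ne_rs: "1 \<le> i \<Longrightarrow> i < p \<Longrightarrow> rp i \<noteq> rs s"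
  using perturbed_nat_eq_iff[of "offset i" "if s then eps else - eps" "ox i" m] offset_small
    eps0 eps1 orb_ne_start[OF cyc mp]
  by (auto simp: rp_eq rs_eq)

lemma rp_inj: "1 \<le> i \<Longrightarrow> i < p \<Longrightarrow> 1 \<le> i' \<Longrightarrow> i' < p \<Longrightarrow> rp i = rp i' \<Longrightarrow> i = i'"
  using perturbed_nat_eq_iff[OF offset_small offset_small] orb_inj[OF cyc mp] by (simp add: rp_eq)

lemma shared_points_cases:
  assumes "z \<in> shared_points"
  obtains k where "k < p" "z = real k"
    | i where "1 \<le> i" "i \<le> j" "z = rp i"
  using assms by (auto simp: shared_points_def)

lemma shared_points_outside_rsig:
  assumes "z \<in> shared_points" "z \<noteq> real m"
  shows "z < rs False \<or> rs True < z"
proof -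
  obtain k t where kt: "z = real k + t" "\<bar>t\<bar> \<le> eps" "k \<noteq> m"
  proof (cases rule: shared_points_cases[OF assms(1)])
    case (1 k)
    then show ?thesis
      using that[of k 0] assms(2) eps0 by auto
  next
    case (2 i)
    then show ?thesis
      using that[of "ox i" "offset i"] orb_ne_start[OF cyc mp, of i] jp eps0 by (auto simp: rp_eq)
  qed
  then consider "real k + 1 \<le> real m" | "real m + 1 \<le> real k"
    by linarith
  then show ?thesis
    using kt eps1 by cases (auto simp: rs_eq)
qed

lemma rs_order: "rs False < real m" "real m < rs True"
  using eps0 by (auto simp: rs_eq)

lemma rs_notin_shared_points: "rs s \<notin> shared_points"
  using shared_points_outside_rsig[of "rs s"] rs_order by (cases s) auto

lemma m_in_shared_points: "real m \<in> shared_points"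
  using mp by (simp add: shared_points_def)

lemma rp_in_shared_points: "1 \<le> i \<Longrightarrow> i \<le> j \<Longrightarrow> rp i \<in> shared_points"
  by (simp add: shared_points_def)

lemma real_in_shared_points: "k < p \<Longrightarrow> real k \<in> shared_points"
  by (simp add: shared_points_def)

lemma card_S: "card (S s) = p + j + 1"
proof -
  have "inj_on rp {1..j}"
    using rp_inj jp by (intro inj_onI) auto
  moreover have "real ` {..<p} \<inter> rp ` {1..j} = {}"
    using real_ne_rp by auto
  ultimately have "card shared_points = p + j"
    unfolding shared_points_def by (simp add: card_Un_disjoint card_image)
  then show ?thesis
    using rs_notin_shared_points finite_shared_points by (simp add: S_eq)
qed


abbreviation fold_pos :: nat where
  "fold_pos \<equiv> rank shared_points (real m)"

definition swap_rsig :: "real \<Rightarrow> real" where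
  "swap_rsig y = (if y = rs False then rs True else y)"

lemma rank_rs_minus: "rank (S False) (rs False) = fold_pos"
proof -
  have "{z \<in> S False. z < rs False} = {z \<in> shared_points. z < real m}"
    using shared_points_outside_rsig rs_order rs_notin_shared_points by (fastforce simp: S_eq)
  then show ?thesis by simp
qed

lemma rank_m_minus: "rank (S False) (real m) = Suc fold_pos"
proof -
  have "{z \<in> S False. z < real m} = insert (rs False) {z \<in> shared_points. z < real m}"
    using rs_order by (auto simp: S_eq)
  then show ?thesis
    using rs_notin_shared_points finite_shared_points by simp
qed

lemma rank_m_plus: "rank (S True) (real m) = fold_pos"
proof -
  have "{z \<in> S True. z < real m} = {z \<in> shared_points. z < real m}"
    using rs_order by (auto simp: S_eq)
  then show ?thesis by simp
qed

lemma rank_rs_plus: "rank (S True) (rs True) = Suc fold_pos"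
proof -
  have "{z \<in> S True. z < rs True} = insert (real m) {z \<in> shared_points. z < real m}"
    using rs_order m_in_shared_points shared_points_outside_rsig
    by (auto simp: S_eq dest: order.strict_trans)
  then show ?thesis
    using finite_shared_points by simp
qed

lemma rank_shared_points:
  assumes "y \<in> shared_points" "y \<noteq> real m"
  shows "rank (S True) y = rank (S False) y"
  using shared_points_outside_rsig[OF assms]
proof
  assume "y < rs False"
  then have "{z \<in> S s. z < y} = {z \<in> shared_points. z < y}" for s
    using rs_order by (cases s) (auto simp: S_eq)
  then show ?thesis by simp
next
  assume "rs True < y"
  then have "{z \<in> S s. z < y} = insert (rs s) {z \<in> shared_points. z < y}" for s
    using rs_order by (cases s) (auto simp: S_eq)
  then show ?thesis
    using rs_notin_shared_points finite_shared_points by simp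
qed

lemma rank_swap_rsig:
  assumes "y \<in> S False"
  shows "rank (S True) (swap_rsig y) = adj_transpose fold_pos (rank (S False) y)"
proof -
  consider "y = rs False" | "y = real m" | "y \<in> shared_points" "y \<noteq> rs False" "y \<noteq> real m"
    using assms by (auto simp: S_eq)
  then show ?thesis
  proof cases
    case 3
    then have "rank (S False) y \<noteq> fold_pos" "rank (S False) y \<noteq> Suc fold_pos"
      using rank_inj[OF finite_S assms] m_in_shared_points rank_rs_minus rank_m_minus
      by (auto simp: S_eq)
    then show ?thesis
      using 3 rank_shared_points by (simp add: swap_rsig_def)
  qed (use rank_rs_minus rank_rs_plus rank_m_minus rank_m_plus real_ne_rs in
      \<open>simp_all add: swap_rsig_def\<close>)
qed

lemma the_rp_index:
  assumes "1 \<le> i" "i < j"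
  shows "(THE i'. 1 \<le> i' \<and> i' < j \<and> rp i = rp i') = i"
  using assms rp_inj jp by (intro the_equality) auto

lemma gmap_rsig: "g s (rs s) = rp 1"
  by (simp add: gmap_def)

lemma gmap_last: "g s (real (ox (p - 1))) = rs s"
  using real_ne_rs real_ne_rp by (simp add: gmap_def)

lemma gmap_m: "g s (real m) = real (ox 1)"
proof -
  have "ox (p - 1) \<noteq> m"
    using orb_ne_start[OF cyc mp, of "p - 1"] j1 jp by simp
  then show ?thesis
    using real_ne_rs real_ne_rp by (simp add: gmap_def orb_Suc)
qed

lemma gmap_rp_last: "g s (rp j) = real m"
  using rp_ne_rs j1 jp by (simp add: gmap_def)

lemma gmap_shared_points:
  assumes y: "y \<in> shared_points" "y \<noteq> real (ox (p - 1))"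
  shows "g False y \<in> shared_points" "g True y = g False y"
proof -
  have ne: "y \<noteq> rs True" "y \<noteq> rs False"
    using y rs_notin_shared_points by auto
  then have "(y = rs True) = False" "(y = rs False) = False" "(y = real (ox (p - 1))) = False"
    using y(2) by simp_all
  then show "g True y = g False y"
    unfolding gmap_def by (simp only: if_False)
  show "g False y \<in> shared_points"
  proof (cases rule: shared_points_cases[OF y(1)])
    case (1 k)
    then show ?thesis
      using ne y(2) real_ne_rp cyclic_perm_lt[OF cyc] real_in_shared_points
      by (simp add: gmap_def)
  next
    case (2 i)
    show ?thesis
    proof (cases "i = j")
      case False
      then have "i < j" "rp i \<noteq> rp j"
        using 2 rp_inj jp by auto
      moreover have "\<exists>i'. 1 \<le> i' \<and> i' < j \<and> rp i = rp i'"
        using 2 \<open>i < j\<close> by blast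
      ultimately have "g False y = rp (Suc i)"
        using 2 ne the_rp_index[of i] by (simp add: gmap_def)
      then show ?thesis
        using rp_in_shared_points[of "Suc i"] 2 \<open>i < j\<close> by simp
    qed (use 2 ne m_in_shared_points in \<open>simp add: gmap_def\<close>)
  qed
qed

lemma gmap_swap_rsig:
  assumes "y \<in> S False"
  shows "g True (swap_rsig y) = swap_rsig (g False y)" "g False y \<in> S False"
proof -
  have rp1: "rp 1 \<in> shared_points" "rp 1 \<noteq> rs False"
    using rp_in_shared_points[of 1] rp_ne_rs[of 1] j1 jp by auto
  have swap_shared: "swap_rsig z = z" if "z \<in> shared_points" for z
    using that rs_notin_shared_points by (auto simp: swap_rsig_def)
  consider "y = rs False" | "y = real (ox (p - 1))" | "y \<in> shared_points" "y \<noteq> real (ox (p - 1))"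
    using assms by (auto simp: S_eq)
  then have "g True (swap_rsig y) = swap_rsig (g False y) \<and> g False y \<in> S False"
  proof cases
    case 1
    then show ?thesis
      using rp1 gmap_rsig swap_shared by (simp add: swap_rsig_def S_eq)
  next
    case 2
    then show ?thesis
      using real_in_shared_points[OF orb_lt[OF cyc mp]] swap_shared gmap_last
      by (simp add: swap_rsig_def S_eq)
  next
    case 3
    then show ?thesis
      using gmap_shared_points[OF 3] swap_shared by (simp add: S_eq)
  qed
  then show "g True (swap_rsig y) = swap_rsig (g False y)" "g False y \<in> S False"
    by simp_all
qed

lemma ups_rank: "y \<in> S s \<Longrightarrow> ups s (rank (S s) y) = rank (S s) (g s y)"
  unfolding upsig_def Let_def using sorted_nth_rank[OF finite_S] by simp

lemma fold_pos_lt: "Suc fold_pos < p + j + 1"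
  using rank_less_card[OF finite_S, of "real m" False] rank_m_minus card_S m_in_shared_points
  by (simp add: S_eq)

lemma upsig_conj_transpose:
  assumes "k < p + j + 1"
  shows "ups True k = adj_transpose fold_pos (ups False (adj_transpose fold_pos k))"
proof -
  define k' where "k' = adj_transpose fold_pos k"
  have "k' < card (S False)"
    using assms fold_pos_lt card_S unfolding k'_def by (auto simp: transpose_def)
  then obtain y where y: "y \<in> S False" "rank (S False) y = k'"
    using rank_sorted_nth[OF finite_S] nth_mem[of _ "sorted_list_of_set (S False)"]
    by (metis card_S finite_S length_sorted_list_of_set set_sorted_list_of_set)
  have swap_in: "swap_rsig y \<in> S True"
    using y(1) by (auto simp: swap_rsig_def S_eq)
  have "rank (S True) (swap_rsig y) = k"
    using rank_swap_rsig[OF y(1)] y(2) unfolding k'_def by simp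
  then have "ups True k = rank (S True) (g True (swap_rsig y))"
    using ups_rank[OF swap_in] by simp
  also have "\<dots> = adj_transpose fold_pos (rank (S False) (g False y))"
    using gmap_swap_rsig[OF y(1)] rank_swap_rsig by simp
  also have "rank (S False) (g False y) = ups False k'"
    using ups_rank[OF y(1)] y(2) by simp
  finally show ?thesis
    unfolding k'_def .
qed


lemma upsig_minus_at_fold:
  shows "ups False fold_pos < ups False (Suc fold_pos)" "ups False fold_pos \<noteq> fold_pos"
proof -
  have mem: "rp 1 \<in> S False" "real (ox 1) \<in> S False" "rs False \<in> S False" "real m \<in> S False"
    using rp_in_shared_points[of 1] real_in_shared_points[OF orb_lt[OF cyc mp]]
      m_in_shared_points j1 by (simp_all add: S_eq)
  have at_fold: "ups False fold_pos = rank (S False) (rp 1)"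
    using ups_rank[OF mem(3)] rank_rs_minus gmap_rsig by simp
  have "rp 1 < real (ox 1)"
    using eps0 by (simp add: rpt_def rho_def)
  then show "ups False fold_pos < ups False (Suc fold_pos)"
    using at_fold ups_rank[OF mem(4)] rank_m_minus gmap_m rank_strict_mono[OF finite_S mem(1,2)]
    by simp
  have "rp 1 \<noteq> rs False"
    using rp_ne_rs j1 jp by simp
  then have "rank (S False) (rp 1) \<noteq> rank (S False) (rs False)"
    using rank_inj[OF finite_S mem(1,3)] by blast
  then show "ups False fold_pos \<noteq> fold_pos"
    using at_fold rank_rs_minus by simp
qed

lemma upsig_minus_preimages:
  "ups False (rank (S False) (real (ox (p - 1)))) = fold_pos"
  "ups False (rank (S False) (rp j)) = Suc fold_pos"
  using ups_rank[of "real (ox (p - 1))" False] ups_rank[of "rp j" False]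
    real_in_shared_points[OF orb_lt[OF cyc mp]] rp_in_shared_points[of j] j1
    gmap_last rank_rs_minus gmap_rp_last rank_m_minus
  by (simp_all add: S_eq)

lemma rank_S_minus_lt:
  "rank (S False) (real (ox (p - 1))) < p + j + 1" "rank (S False) (rp j) < p + j + 1"
  using rank_less_card[OF finite_S, of "real (ox (p - 1))" False] rank_less_card[OF finite_S, of "rp j" False]
    real_in_shared_points[OF orb_lt[OF cyc mp]] rp_in_shared_points[of j] j1 card_S
  by (simp_all add: S_eq)

lemma braid_conj_if_rp_left_of_preimage:
  assumes "ppb_word (p + j + 1) (ups True) wp" "ppb_word (p + j + 1) (ups False) wm"
    and "rp j < real (ox (p - 1))"
  shows "braid_conj (p + j + 1) (pos_word wp) (pos_word wm)"
proof -
  have "rank (S False) (rp j) < rank (S False) (real (ox (p - 1)))"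
    using assms(3) real_in_shared_points[OF orb_lt[OF cyc mp]] rp_in_shared_points[of j] j1
    by (intro rank_strict_mono finite_S) (simp_all add: S_eq)
  then show ?thesis
    using ppb_braid_conj[OF assms(1,2) fold_pos_lt upsig_conj_transpose upsig_minus_at_fold(1)
        upsig_minus_preimages] rank_S_minus_lt(1) by blast
qed

lemma braid_revconj_if_rp_right_of_preimage:
  assumes "ppb_word (p + j + 1) (ups True) wp" "ppb_word (p + j + 1) (ups False) wm"
    and "real (ox (p - 1)) < rp j"
  shows "braid_revconj (p + j + 1) (pos_word wp) (pos_word wm)"
proof -
  have "rank (S False) (real (ox (p - 1))) < rank (S False) (rp j)"
    using assms(3) real_in_shared_points[OF orb_lt[OF cyc mp]] rp_in_shared_points[of j] j1
    by (intro rank_strict_mono finite_S) (simp_all add: S_eq)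
  then show ?thesis
    using ppb_braid_revconj[OF assms(1,2) fold_pos_lt upsig_conj_transpose upsig_minus_at_fold
        upsig_minus_preimages] rank_S_minus_lt(2) by blast
qed

end

theorem mainTheorem1:
  fixes p m e j :: nat and v :: "nat \<Rightarrow> nat" and eps :: real and wp wm :: "nat list"
  assumes "p \<ge> 3"
    and "cyclic_perm p v"
    and "unimodal p v m"
    and "e + 2 \<le> p"
    and "min (v e) (v (e + 1)) < m" and "m < max (v e) (v (e + 1))"
    and "1 \<le> j" and "j \<le> p - 1"
    and "(orb v m j = e \<and> odd (rho v m j)) \<or> (orb v m j = e + 1 \<and> even (rho v m j))"
    and "0 < eps" and "eps < 1/4"
    and "ppb_word (p + j + 1) (upsig p v m j eps True) wp"
    and "ppb_word (p + j + 1) (upsig p v m j eps False) wm"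
  shows "(e < m \<longrightarrow> braid_conj (p + j + 1) (pos_word wp) (pos_word wm)) \<and>
         (m \<le> e \<longrightarrow> braid_revconj (p + j + 1) (pos_word wp) (pos_word wm))"
proof -
  have "m < p"
    using assms(3) by (simp add: unimodal_def)
  interpret orbit_perturbation p m j v eps
    using assms \<open>m < p\<close> by unfold_locales auto
  define q where "q = orb v m (p - 1)"
  have q: "v q = m" "q < p"
    unfolding q_def using v_orb_last orb_lt cyc \<open>m < p\<close> by auto
  have rp_j: "rp j = real e + eps \<or> rp j = real e + 1 - eps"
    using assms(9) by (auto simp: rpt_def)
  show ?thesis
  proof (intro conjI impI)
    assume "e < m"
    then have "e < q"
      using unimodal_other_preimage_left assms(3,5,6) q(1) by blast
    then have "rp j < real q"
      using rp_j eps0 eps1 by linarith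
    then show "braid_conj (p + j + 1) (pos_word wp) (pos_word wm)"
      using braid_conj_if_rp_left_of_preimage assms(12,13) unfolding q_def by blast
  next
    assume "m \<le> e"
    then have "q \<le> e"
      using unimodal_other_preimage_right assms(3-6) q by blast
    then have "real q < rp j"
      using rp_j eps0 eps1 by linarith
    then show "braid_revconj (p + j + 1) (pos_word wp) (pos_word wm)"
      using braid_revconj_if_rp_right_of_preimage assms(12,13) unfolding q_def by blast
  qed
qed

end
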